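(* The model structure $\mathbb{C}^F$ associated to a functor $F:\mathcal{C}\to\mathscr{E}'$ need not be proper: there exist a bicomplete category $\mathcal{C}$ and a functor $F:\mathcal{C}\to\mathscr{E}'$ for which $\mathbb{C}^F$ is not right proper, and there exist a bicomplete category $\mathcal{C}$ and a functor $F:\mathcal{C}\to\mathscr{E}'$ for which $\mathbb{C}^F$ is not left proper.
   Context: Bicomplete means having all finite limits and finite colimits. $\mathscr{E}'$ is the totally ordered category with three objects $\varnothing\to E\to *$. For a functor $F:\mathcal{C}\to\mathscr{E}'$, $\mathbb{C}^F$ is the model structure on $\mathcal{C}$ with cofibrations $\{A\to B: F(B)\ne\varnothing\}\cup\mathrm{iso}\,\mathcal{C}$, fibrations $\{X\to Y: F(X)\neq *\}\cup\mathrm{iso}\,\mathcal{C}$, and weak equivalences $\{f: F(f)=1_\varnothing\text{ or }F(f)=1_*\}\cup\mathrm{iso}\,\mathcal{C}$. Left (resp. right) proper: pushouts of weak equivalences along cofibrations (resp. pullbacks along fibrations) are weak equivalences. *)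

theory Defs
  imports Main
begin

section \<open>Categories (arrows composed as Comp g f = g \<circ> f, defined when Cod f = Dom g)\<close>

record ('o, 'm) cat =
  Obj  :: "'o set"
  Arr  :: "'m set"
  Dom  :: "'m \<Rightarrow> 'o"
  Cod  :: "'m \<Rightarrow> 'o"
  Id   :: "'o \<Rightarrow> 'm"
  Comp :: "'m \<Rightarrow> 'm \<Rightarrow> 'm"

definition category :: "('o, 'm) cat \<Rightarrow> bool" where
  "category C \<longleftrightarrow>
     (\<forall>f\<in>Arr C. Dom C f \<in> Obj C \<and> Cod C f \<in> Obj C) \<and>
     (\<forall>a\<in>Obj C. Id C a \<in> Arr C \<and> Dom C (Id C a) = a \<and> Cod C (Id C a) = a) \<and>
     (\<forall>f\<in>Arr C. \<forall>g\<in>Arr C. Cod C f = Dom C g \<longrightarrow>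
        Comp C g f \<in> Arr C \<and> Dom C (Comp C g f) = Dom C f \<and> Cod C (Comp C g f) = Cod C g) \<and>
     (\<forall>f\<in>Arr C. Comp C f (Id C (Dom C f)) = f \<and> Comp C (Id C (Cod C f)) f = f) \<and>
     (\<forall>f\<in>Arr C. \<forall>g\<in>Arr C. \<forall>h\<in>Arr C. Cod C f = Dom C g \<longrightarrow> Cod C g = Dom C h \<longrightarrow>
        Comp C h (Comp C g f) = Comp C (Comp C h g) f)"

definition iso :: "('o, 'm) cat \<Rightarrow> 'm \<Rightarrow> bool" where
  "iso C f \<longleftrightarrow> f \<in> Arr C \<and>
     (\<exists>g\<in>Arr C. Dom C g = Cod C f \<and> Cod C g = Dom C f \<and>
        Comp C g f = Id C (Dom C f) \<and> Comp C f g = Id C (Cod C f))"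

definition is_functor :: "('o, 'm) cat \<Rightarrow> ('p, 'n) cat \<Rightarrow> ('o \<Rightarrow> 'p) \<Rightarrow> ('m \<Rightarrow> 'n) \<Rightarrow> bool" where
  "is_functor C D Fo Fa \<longleftrightarrow>
     (\<forall>a\<in>Obj C. Fo a \<in> Obj D) \<and>
     (\<forall>f\<in>Arr C. Fa f \<in> Arr D \<and> Dom D (Fa f) = Fo (Dom C f) \<and> Cod D (Fa f) = Fo (Cod C f)) \<and>
     (\<forall>a\<in>Obj C. Fa (Id C a) = Id D (Fo a)) \<and>
     (\<forall>f\<in>Arr C. \<forall>g\<in>Arr C. Cod C f = Dom C g \<longrightarrow> Fa (Comp C g f) = Comp D (Fa g) (Fa f))"

definition cone :: "('o, 'm) cat \<Rightarrow> ('j, 'k) cat \<Rightarrow> ('j \<Rightarrow> 'o) \<Rightarrow> ('k \<Rightarrow> 'm)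
                    \<Rightarrow> 'o \<Rightarrow> ('j \<Rightarrow> 'm) \<Rightarrow> bool" where
  "cone C J Do Da c leg \<longleftrightarrow> c \<in> Obj C \<and>
     (\<forall>j\<in>Obj J. leg j \<in> Arr C \<and> Dom C (leg j) = c \<and> Cod C (leg j) = Do j) \<and>
     (\<forall>u\<in>Arr J. Comp C (Da u) (leg (Dom J u)) = leg (Cod J u))"

definition is_limit :: "('o, 'm) cat \<Rightarrow> ('j, 'k) cat \<Rightarrow> ('j \<Rightarrow> 'o) \<Rightarrow> ('k \<Rightarrow> 'm)
                    \<Rightarrow> 'o \<Rightarrow> ('j \<Rightarrow> 'm) \<Rightarrow> bool" where
  "is_limit C J Do Da c leg \<longleftrightarrow> cone C J Do Da c leg \<and>
     (\<forall>c' leg'. cone C J Do Da c' leg' \<longrightarrow>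
        (\<exists>!h. h \<in> Arr C \<and> Dom C h = c' \<and> Cod C h = c \<and>
              (\<forall>j\<in>Obj J. Comp C (leg j) h = leg' j)))"

definition cocone :: "('o, 'm) cat \<Rightarrow> ('j, 'k) cat \<Rightarrow> ('j \<Rightarrow> 'o) \<Rightarrow> ('k \<Rightarrow> 'm)
                    \<Rightarrow> 'o \<Rightarrow> ('j \<Rightarrow> 'm) \<Rightarrow> bool" where
  "cocone C J Do Da c leg \<longleftrightarrow> c \<in> Obj C \<and>
     (\<forall>j\<in>Obj J. leg j \<in> Arr C \<and> Dom C (leg j) = Do j \<and> Cod C (leg j) = c) \<and>
     (\<forall>u\<in>Arr J. Comp C (leg (Cod J u)) (Da u) = leg (Dom J u))"

definition is_colimit :: "('o, 'm) cat \<Rightarrow> ('j, 'k) cat \<Rightarrow> ('j \<Rightarrow> 'o) \<Rightarrow> ('k \<Rightarrow> 'm)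
                    \<Rightarrow> 'o \<Rightarrow> ('j \<Rightarrow> 'm) \<Rightarrow> bool" where
  "is_colimit C J Do Da c leg \<longleftrightarrow> cocone C J Do Da c leg \<and>
     (\<forall>c' leg'. cocone C J Do Da c' leg' \<longrightarrow>
        (\<exists>!h. h \<in> Arr C \<and> Dom C h = c \<and> Cod C h = c' \<and>
              (\<forall>j\<in>Obj J. Comp C h (leg j) = leg' j)))"

text \<open>Finite index categories: every finite category is isomorphic to one whose objects
  and arrows are natural numbers, so quantifying over those is no restriction.\<close>
definition finite_category :: "(nat, nat) cat \<Rightarrow> bool" where
  "finite_category J \<longleftrightarrow> category J \<and> finite (Obj J) \<and> finite (Arr J)"

definition bicomplete :: "('o, 'm) cat \<Rightarrow> bool" where
  "bicomplete C \<longleftrightarrow>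
     (\<forall>(J :: (nat, nat) cat) Do Da. finite_category J \<and> is_functor J C Do Da \<longrightarrow>
        (\<exists>c leg. is_limit C J Do Da c leg) \<and> (\<exists>c leg. is_colimit C J Do Da c leg))"

text \<open>Square  P --a--> X --w--> Y  and  P --b--> Z --p--> Y  is a pullback of the cospan (w, p).\<close>
definition is_pullback :: "('o, 'm) cat \<Rightarrow> 'm \<Rightarrow> 'm \<Rightarrow> 'm \<Rightarrow> 'm \<Rightarrow> bool" where
  "is_pullback C w p a b \<longleftrightarrow>
     w \<in> Arr C \<and> p \<in> Arr C \<and> a \<in> Arr C \<and> b \<in> Arr C \<and>
     Cod C w = Cod C p \<and> Cod C a = Dom C w \<and> Cod C b = Dom C p \<and> Dom C a = Dom C b \<and>
     Comp C w a = Comp C p b \<and>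
     (\<forall>a' b'. a' \<in> Arr C \<and> b' \<in> Arr C \<and> Dom C a' = Dom C b' \<and>
        Cod C a' = Dom C w \<and> Cod C b' = Dom C p \<and> Comp C w a' = Comp C p b' \<longrightarrow>
        (\<exists>!h. h \<in> Arr C \<and> Dom C h = Dom C a' \<and> Cod C h = Dom C a \<and>
              Comp C a h = a' \<and> Comp C b h = b'))"

text \<open>Square  A --w--> B --a--> Q  and  A --i--> Z --b--> Q  is a pushout of the span (w, i).\<close>
definition is_pushout :: "('o, 'm) cat \<Rightarrow> 'm \<Rightarrow> 'm \<Rightarrow> 'm \<Rightarrow> 'm \<Rightarrow> bool" where
  "is_pushout C w i a b \<longleftrightarrow>
     w \<in> Arr C \<and> i \<in> Arr C \<and> a \<in> Arr C \<and> b \<in> Arr C \<and>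
     Dom C w = Dom C i \<and> Dom C a = Cod C w \<and> Dom C b = Cod C i \<and> Cod C a = Cod C b \<and>
     Comp C a w = Comp C b i \<and>
     (\<forall>a' b'. a' \<in> Arr C \<and> b' \<in> Arr C \<and> Cod C a' = Cod C b' \<and>
        Dom C a' = Cod C w \<and> Dom C b' = Cod C i \<and> Comp C a' w = Comp C b' i \<longrightarrow>
        (\<exists>!h. h \<in> Arr C \<and> Dom C h = Cod C a \<and> Cod C h = Cod C a' \<and>
              Comp C h a = a' \<and> Comp C h b = b'))"

section \<open>The category E' : the total order  \<emptyset> \<rightarrow> E \<rightarrow> *\<close>

datatype eobj = EEmpty | EE | EStar

fun erank :: "eobj \<Rightarrow> nat" where
  "erank EEmpty = 0" | "erank EE = 1" | "erank EStar = 2"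

definition Eprime :: "(eobj, eobj \<times> eobj) cat" where
  "Eprime = \<lparr> Obj = UNIV, Arr = {(x, y). erank x \<le> erank y}, Dom = fst, Cod = snd,
              Id = (\<lambda>x. (x, x)), Comp = (\<lambda>g f. (fst f, snd g)) \<rparr>"

definition cofF :: "('o, 'm) cat \<Rightarrow> ('o \<Rightarrow> eobj) \<Rightarrow> 'm \<Rightarrow> bool" where
  "cofF C Fo f \<longleftrightarrow> f \<in> Arr C \<and> (Fo (Cod C f) \<noteq> EEmpty \<or> iso C f)"

definition fibF :: "('o, 'm) cat \<Rightarrow> ('o \<Rightarrow> eobj) \<Rightarrow> 'm \<Rightarrow> bool" where
  "fibF C Fo f \<longleftrightarrow> f \<in> Arr C \<and> (Fo (Dom C f) \<noteq> EStar \<or> iso C f)"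

definition weF :: "('o, 'm) cat \<Rightarrow> ('m \<Rightarrow> eobj \<times> eobj) \<Rightarrow> 'm \<Rightarrow> bool" where
  "weF C Fa f \<longleftrightarrow> f \<in> Arr C \<and>
     (Fa f = Id Eprime EEmpty \<or> Fa f = Id Eprime EStar \<or> iso C f)"

definition right_proper :: "('o, 'm) cat \<Rightarrow> ('o \<Rightarrow> eobj) \<Rightarrow> ('m \<Rightarrow> eobj \<times> eobj) \<Rightarrow> bool" where
  "right_proper C Fo Fa \<longleftrightarrow>
     (\<forall>w p a b. weF C Fa w \<and> fibF C Fo p \<and> is_pullback C w p a b \<longrightarrow> weF C Fa b)"

definition left_proper :: "('o, 'm) cat \<Rightarrow> ('o \<Rightarrow> eobj) \<Rightarrow> ('m \<Rightarrow> eobj \<times> eobj) \<Rightarrow> bool" where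
  "left_proper C Fo Fa \<longleftrightarrow>
     (\<forall>w i a b. weF C Fa w \<and> cofF C Fo i \<and> is_pushout C w i a b \<longrightarrow> weF C Fa b)"

end

theory Submission
  imports Defs
begin

(* A preorder on the objects 0, ..., n-1 is a thin category, encoded on the
   natural numbers by letting the unique arrow i -> j be the number n*i + j.  In such a
   category a limit (colimit) of a diagram is a greatest lower bound (least upper bound)
   of the objects in its image, pullbacks are binary meets and pushouts binary joins; and
   if every subset has a join then every subset has a meet (the join of its lower bounds),
   so such a preorder is bicomplete.

   The counterexample is the "diamond" 0 < 1, 2 < 3 with 1 and 2 incomparable.  Its square
   0 -> 1 -> 3, 0 -> 2 -> 3 is both a pullback and a pushout.  With F = (empty, star, E, star)
   on 0, 1, 2, 3 the arrow 1 -> 3 is a weak equivalence, 2 -> 3 a fibration, but its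
   pullback 0 -> 2 is no weak equivalence; with F = (empty, empty, E, star) the arrow 0 -> 1
   is a weak equivalence, 0 -> 2 a cofibration, but its pushout 2 -> 3 is not. *)

definition preorder_below :: "nat \<Rightarrow> (nat \<Rightarrow> nat \<Rightarrow> bool) \<Rightarrow> bool" where
  "preorder_below n le \<longleftrightarrow> (\<forall>i<n. le i i) \<and>
     (\<forall>i j k. i < n \<longrightarrow> j < n \<longrightarrow> k < n \<longrightarrow> le i j \<longrightarrow> le j k \<longrightarrow> le i k)"

definition poset_arr :: "nat \<Rightarrow> nat \<Rightarrow> nat \<Rightarrow> nat" where
  "poset_arr n i j = n * i + j"

definition poset_cat :: "nat \<Rightarrow> (nat \<Rightarrow> nat \<Rightarrow> bool) \<Rightarrow> (nat, nat) cat" where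
  "poset_cat n le = \<lparr> Obj = {..<n},
     Arr = {f. f div n < n \<and> f mod n < n \<and> le (f div n) (f mod n)},
     Dom = (\<lambda>f. f div n), Cod = (\<lambda>f. f mod n), Id = (\<lambda>a. poset_arr n a a),
     Comp = (\<lambda>g f. poset_arr n (f div n) (g mod n)) \<rparr>"

lemma poset_cat_simps [simp]:
  "Obj (poset_cat n le) = {..<n}"
  "f \<in> Arr (poset_cat n le) \<longleftrightarrow> f div n < n \<and> f mod n < n \<and> le (f div n) (f mod n)"
  "Dom (poset_cat n le) f = f div n"
  "Cod (poset_cat n le) f = f mod n"
  "Id (poset_cat n le) a = poset_arr n a a"
  "Comp (poset_cat n le) g f = poset_arr n (f div n) (g mod n)"
  by (simp_all add: poset_cat_def)

lemma poset_arr_div_mod [simp]: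
  assumes "j < n"
  shows "poset_arr n i j div n = i" "poset_arr n i j mod n = j"
  using assms by (simp_all add: poset_arr_def)

lemma poset_arr_endpoints: "poset_arr n (f div n) (f mod n) = f"
  by (simp add: poset_arr_def)

lemma category_poset_cat:
  assumes "preorder_below n le"
  shows "category (poset_cat n le)"
proof -
  have refl: "\<And>i. i < n \<Longrightarrow> le i i"
    and trans: "\<And>i j k. i < n \<Longrightarrow> j < n \<Longrightarrow> k < n \<Longrightarrow> le i j \<Longrightarrow> le j k \<Longrightarrow> le i k"
    using assms unfolding preorder_below_def by blast+
  show ?thesis
    unfolding category_def
    by (auto simp: refl poset_arr_endpoints intro: trans)
qed

lemma iso_poset_cat:
  assumes "iso (poset_cat n le) f"
  shows "le (f mod n) (f div n)"
  using assms unfolding iso_def by auto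

definition poset_map :: "nat \<Rightarrow> (nat \<Rightarrow> eobj) \<Rightarrow> nat \<Rightarrow> eobj \<times> eobj" where
  "poset_map n Fo f = (Fo (f div n), Fo (f mod n))"

lemma functor_poset_map:
  assumes "\<And>i j. i < n \<Longrightarrow> j < n \<Longrightarrow> le i j \<Longrightarrow> erank (Fo i) \<le> erank (Fo j)"
  shows "is_functor (poset_cat n le) Eprime Fo (poset_map n Fo)"
  using assms unfolding is_functor_def Eprime_def poset_map_def by auto

lemma cone_poset_cat:
  assumes "cone (poset_cat n le) J Do Da c leg" "j \<in> Obj J"
  shows "leg j = poset_arr n c (Do j)" "le c (Do j)"
proof -
  have "leg j \<in> Arr (poset_cat n le)" "leg j div n = c" "leg j mod n = Do j"
    using assms unfolding cone_def by auto
  then show "leg j = poset_arr n c (Do j)" "le c (Do j)"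
    by (metis poset_arr_endpoints, simp)
qed

lemma cocone_poset_cat:
  assumes "cocone (poset_cat n le) J Do Da c leg" "j \<in> Obj J"
  shows "leg j = poset_arr n (Do j) c" "le (Do j) c"
proof -
  have "leg j \<in> Arr (poset_cat n le)" "leg j div n = Do j" "leg j mod n = c"
    using assms unfolding cocone_def by auto
  then show "leg j = poset_arr n (Do j) c" "le (Do j) c"
    by (metis poset_arr_endpoints, simp)
qed

definition is_meet :: "nat \<Rightarrow> (nat \<Rightarrow> nat \<Rightarrow> bool) \<Rightarrow> nat set \<Rightarrow> nat \<Rightarrow> bool" where
  "is_meet n le S m \<longleftrightarrow> m < n \<and> (\<forall>s\<in>S. le m s) \<and> (\<forall>c<n. (\<forall>s\<in>S. le c s) \<longrightarrow> le c m)"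

definition is_join :: "nat \<Rightarrow> (nat \<Rightarrow> nat \<Rightarrow> bool) \<Rightarrow> nat set \<Rightarrow> nat \<Rightarrow> bool" where
  "is_join n le S m \<longleftrightarrow> m < n \<and> (\<forall>s\<in>S. le s m) \<and> (\<forall>c<n. (\<forall>s\<in>S. le s c) \<longrightarrow> le m c)"

lemma meet_as_join_of_lower_bounds:
  assumes "S \<subseteq> {..<n}" "is_join n le {c. c < n \<and> (\<forall>s\<in>S. le c s)} m"
  shows "is_meet n le S m"
  using assms unfolding is_meet_def is_join_def by blast

lemma limit_poset_cat:
  assumes F: "is_functor J (poset_cat n le) Do Da"
    and m: "is_meet n le (Do ` Obj J) m"
  shows "is_limit (poset_cat n le) J Do Da m (\<lambda>j. poset_arr n m (Do j))"
proof -
  let ?C = "poset_cat n le"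
  have Do_lt: "Do j < n" if "j \<in> Obj J" for j
    using F that unfolding is_functor_def by auto
  have Da: "Do (Dom J u) < n" "Da u mod n = Do (Cod J u)" if "u \<in> Arr J" for u
    using F that unfolding is_functor_def by auto
  have cone: "cone ?C J Do Da m (\<lambda>j. poset_arr n m (Do j))"
    using m Do_lt Da unfolding cone_def is_meet_def by auto
  have universal: "\<exists>!h. h \<in> Arr ?C \<and> Dom ?C h = c \<and> Cod ?C h = m \<and>
          (\<forall>j\<in>Obj J. Comp ?C (poset_arr n m (Do j)) h = leg j)"
    if c: "cone ?C J Do Da c leg" for c leg
  proof
    have "c < n" using c unfolding cone_def by simp
    moreover have "le c m"
      using m \<open>c < n\<close> cone_poset_cat(2)[OF c] unfolding is_meet_def by blast
    ultimately show "poset_arr n c m \<in> Arr ?C \<and> Dom ?C (poset_arr n c m) = c \<and>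
        Cod ?C (poset_arr n c m) = m \<and>
        (\<forall>j\<in>Obj J. Comp ?C (poset_arr n m (Do j)) (poset_arr n c m) = leg j)"
      using m Do_lt cone_poset_cat(1)[OF c] unfolding is_meet_def by auto
  next
    fix h assume "h \<in> Arr ?C \<and> Dom ?C h = c \<and> Cod ?C h = m \<and>
          (\<forall>j\<in>Obj J. Comp ?C (poset_arr n m (Do j)) h = leg j)"
    then show "h = poset_arr n c m"
      by (metis poset_cat_simps(3,4) poset_arr_endpoints)
  qed
  show ?thesis
    unfolding is_limit_def using cone universal by blast
qed

lemma colimit_poset_cat:
  assumes F: "is_functor J (poset_cat n le) Do Da"
    and m: "is_join n le (Do ` Obj J) m"
  shows "is_colimit (poset_cat n le) J Do Da m (\<lambda>j. poset_arr n (Do j) m)"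
proof -
  let ?C = "poset_cat n le"
  have Do_lt: "Do j < n" if "j \<in> Obj J" for j
    using F that unfolding is_functor_def by auto
  have Da: "Da u div n = Do (Dom J u)" if "u \<in> Arr J" for u
    using F that unfolding is_functor_def by auto
  have cocone: "cocone ?C J Do Da m (\<lambda>j. poset_arr n (Do j) m)"
    using m Do_lt Da unfolding cocone_def is_join_def by auto
  have universal: "\<exists>!h. h \<in> Arr ?C \<and> Dom ?C h = m \<and> Cod ?C h = c \<and>
          (\<forall>j\<in>Obj J. Comp ?C h (poset_arr n (Do j) m) = leg j)"
    if c: "cocone ?C J Do Da c leg" for c leg
  proof
    have "c < n" using c unfolding cocone_def by simp
    moreover have "le m c"
      using m \<open>c < n\<close> cocone_poset_cat(2)[OF c] unfolding is_join_def by blast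
    ultimately show "poset_arr n m c \<in> Arr ?C \<and> Dom ?C (poset_arr n m c) = m \<and>
        Cod ?C (poset_arr n m c) = c \<and>
        (\<forall>j\<in>Obj J. Comp ?C (poset_arr n m c) (poset_arr n (Do j) m) = leg j)"
      using m cocone_poset_cat(1)[OF c] unfolding is_join_def by auto
  next
    fix h assume "h \<in> Arr ?C \<and> Dom ?C h = m \<and> Cod ?C h = c \<and>
          (\<forall>j\<in>Obj J. Comp ?C h (poset_arr n (Do j) m) = leg j)"
    then show "h = poset_arr n m c"
      by (metis poset_cat_simps(3,4) poset_arr_endpoints)
  qed
  show ?thesis
    unfolding is_colimit_def using cocone universal by blast
qed

lemma bicomplete_poset_cat:
  assumes joins: "\<And>S. S \<subseteq> {..<n} \<Longrightarrow> \<exists>m. is_join n le S m"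
  shows "bicomplete (poset_cat n le)"
  unfolding bicomplete_def
proof (intro allI impI conjI)
  fix J :: "(nat, nat) cat" and Do Da
  assume "finite_category J \<and> is_functor J (poset_cat n le) Do Da"
  then have F: "is_functor J (poset_cat n le) Do Da" by simp
  then have S: "Do ` Obj J \<subseteq> {..<n}"
    unfolding is_functor_def by auto
  obtain m where "is_join n le {c. c < n \<and> (\<forall>s\<in>Do ` Obj J. le c s)} m"
    using joins[of "{c. c < n \<and> (\<forall>s\<in>Do ` Obj J. le c s)}"] by auto
  with S have "is_meet n le (Do ` Obj J) m"
    by (rule meet_as_join_of_lower_bounds)
  then show "\<exists>c leg. is_limit (poset_cat n le) J Do Da c leg"
    using limit_poset_cat[OF F] by blast
  obtain m' where "is_join n le (Do ` Obj J) m'"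
    using joins[OF S] by blast
  then show "\<exists>c leg. is_colimit (poset_cat n le) J Do Da c leg"
    using colimit_poset_cat[OF F] by blast
qed

lemma pullback_poset_cat:
  assumes "x < n" "y < n" "z < n" "le x z" "le y z"
    and p: "is_meet n le {x, y} p"
  shows "is_pullback (poset_cat n le) (poset_arr n x z) (poset_arr n y z)
           (poset_arr n p x) (poset_arr n p y)"
  unfolding is_pullback_def
proof (intro conjI allI impI)
  let ?C = "poset_cat n le"
  fix a' b' assume h: "a' \<in> Arr ?C \<and> b' \<in> Arr ?C \<and> Dom ?C a' = Dom ?C b' \<and>
      Cod ?C a' = Dom ?C (poset_arr n x z) \<and> Cod ?C b' = Dom ?C (poset_arr n y z) \<and>
      Comp ?C (poset_arr n x z) a' = Comp ?C (poset_arr n y z) b'"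
  define q where "q = a' div n"
  have "a' div n = q" "a' mod n = x" "b' div n = q" "b' mod n = y"
    using h \<open>z < n\<close> unfolding q_def by auto
  then have a': "a' = poset_arr n q x" and b': "b' = poset_arr n q y"
    by (metis poset_arr_endpoints)+
  have "q < n" "le q x" "le q y"
    using h a' b' \<open>x < n\<close> \<open>y < n\<close> by auto
  then have "le q p"
    using p unfolding is_meet_def by auto
  show "\<exists>!h. h \<in> Arr ?C \<and> Dom ?C h = Dom ?C a' \<and> Cod ?C h = Dom ?C (poset_arr n p x) \<and>
      Comp ?C (poset_arr n p x) h = a' \<and> Comp ?C (poset_arr n p y) h = b'"
  proof
    show "poset_arr n q p \<in> Arr ?C \<and> Dom ?C (poset_arr n q p) = Dom ?C a' \<and>
      Cod ?C (poset_arr n q p) = Dom ?C (poset_arr n p x) \<and>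
      Comp ?C (poset_arr n p x) (poset_arr n q p) = a' \<and>
      Comp ?C (poset_arr n p y) (poset_arr n q p) = b'"
      using p \<open>q < n\<close> \<open>le q p\<close> \<open>x < n\<close> \<open>y < n\<close> unfolding a' b' is_meet_def
      by auto
  next
    fix h assume "h \<in> Arr ?C \<and> Dom ?C h = Dom ?C a' \<and> Cod ?C h = Dom ?C (poset_arr n p x) \<and>
      Comp ?C (poset_arr n p x) h = a' \<and> Comp ?C (poset_arr n p y) h = b'"
    then show "h = poset_arr n q p"
      using p \<open>x < n\<close> unfolding a' is_meet_def
      by (metis poset_cat_simps(3,4) poset_arr_div_mod(1) poset_arr_endpoints)
  qed
qed (use assms in \<open>auto simp: is_meet_def\<close>)

lemma pushout_poset_cat:
  assumes "x < n" "y < n" "z < n" "le z x" "le z y"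
    and p: "is_join n le {x, y} p"
  shows "is_pushout (poset_cat n le) (poset_arr n z x) (poset_arr n z y)
           (poset_arr n x p) (poset_arr n y p)"
  unfolding is_pushout_def
proof (intro conjI allI impI)
  let ?C = "poset_cat n le"
  fix a' b' assume h: "a' \<in> Arr ?C \<and> b' \<in> Arr ?C \<and> Cod ?C a' = Cod ?C b' \<and>
      Dom ?C a' = Cod ?C (poset_arr n z x) \<and> Dom ?C b' = Cod ?C (poset_arr n z y) \<and>
      Comp ?C a' (poset_arr n z x) = Comp ?C b' (poset_arr n z y)"
  define q where "q = a' mod n"
  have "a' div n = x" "a' mod n = q" "b' div n = y" "b' mod n = q"
    using h \<open>x < n\<close> \<open>y < n\<close> unfolding q_def by auto
  then have a': "a' = poset_arr n x q" and b': "b' = poset_arr n y q"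
    by (metis poset_arr_endpoints)+
  have "q < n" "le x q" "le y q"
    using h \<open>a' div n = x\<close> \<open>a' mod n = q\<close> \<open>b' div n = y\<close> \<open>b' mod n = q\<close> by auto
  then have "le p q"
    using p unfolding is_join_def by auto
  show "\<exists>!h. h \<in> Arr ?C \<and> Dom ?C h = Cod ?C (poset_arr n x p) \<and> Cod ?C h = Cod ?C a' \<and>
      Comp ?C h (poset_arr n x p) = a' \<and> Comp ?C h (poset_arr n y p) = b'"
  proof
    show "poset_arr n p q \<in> Arr ?C \<and> Dom ?C (poset_arr n p q) = Cod ?C (poset_arr n x p) \<and>
      Cod ?C (poset_arr n p q) = Cod ?C a' \<and>
      Comp ?C (poset_arr n p q) (poset_arr n x p) = a' \<and>
      Comp ?C (poset_arr n p q) (poset_arr n y p) = b'"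
      using p \<open>q < n\<close> \<open>le p q\<close> unfolding a' b' is_join_def by auto
  next
    fix h assume "h \<in> Arr ?C \<and> Dom ?C h = Cod ?C (poset_arr n x p) \<and> Cod ?C h = Cod ?C a' \<and>
      Comp ?C h (poset_arr n x p) = a' \<and> Comp ?C h (poset_arr n y p) = b'"
    then show "h = poset_arr n p q"
      using p \<open>q < n\<close> unfolding a' is_join_def
      by (metis poset_cat_simps(3,4) poset_arr_div_mod(2) poset_arr_endpoints)
  qed
qed (use assms in \<open>auto simp: is_join_def\<close>)

definition diamond_le :: "nat \<Rightarrow> nat \<Rightarrow> bool" where
  "diamond_le i j \<longleftrightarrow> i = 0 \<or> j = 3 \<or> i = j"

abbreviation diamond :: "(nat, nat) cat" where
  "diamond \<equiv> poset_cat 4 diamond_le"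

lemma preorder_diamond: "preorder_below 4 diamond_le"
  unfolding preorder_below_def diamond_le_def by auto

lemma diamond_joins:
  assumes S: "S \<subseteq> {..<4}"
  shows "\<exists>m. is_join 4 diamond_le S m"
proof -
  consider "3 \<in> S" | "1 \<in> S" "2 \<in> S" | "S \<subseteq> {0}" | "1 \<in> S" "S \<subseteq> {0,1}"
    | "2 \<in> S" "S \<subseteq> {0,2}"
  proof -
    have "S \<subseteq> {0,1,2,3}" using S by auto
    then show ?thesis using that by blast
  qed
  then show ?thesis
  proof cases
    case 1 then show ?thesis by (intro exI[of _ 3]) (auto simp: is_join_def diamond_le_def)
  next
    case 2
    have "diamond_le 3 c" if "\<forall>s\<in>S. diamond_le s c" for c
    proof -
      have "diamond_le 1 c" "diamond_le 2 c" using that 2 by blast+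
      then show ?thesis by (auto simp: diamond_le_def)
    qed
    moreover have "\<forall>s\<in>S. diamond_le s 3" by (simp add: diamond_le_def)
    ultimately show ?thesis unfolding is_join_def by (intro exI[of _ 3]) simp
  next
    case 3 then show ?thesis by (intro exI[of _ 0]) (auto simp: is_join_def diamond_le_def)
  next
    case 4 then show ?thesis by (intro exI[of _ 1]) (auto simp: is_join_def diamond_le_def)
  next
    case 5 then show ?thesis by (intro exI[of _ 2]) (auto simp: is_join_def diamond_le_def)
  qed
qed

lemma diamond_meet_1_2: "is_meet 4 diamond_le {1, 2} 0"
  unfolding is_meet_def diamond_le_def by auto

lemma diamond_join_1_2: "is_join 4 diamond_le {1, 2} 3"
  unfolding is_join_def diamond_le_def by auto

definition F_right :: "nat \<Rightarrow> eobj" where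
  "F_right i = (if i = 0 then EEmpty else if i = 2 then EE else EStar)"

definition F_left :: "nat \<Rightarrow> eobj" where
  "F_left i = (if i \<le> 1 then EEmpty else if i = 2 then EE else EStar)"

lemma diamond_not_right_proper:
  "\<not> right_proper diamond F_right (poset_map 4 F_right)"
proof
  assume "right_proper diamond F_right (poset_map 4 F_right)"
  moreover have "weF diamond (poset_map 4 F_right) (poset_arr 4 1 3)"
    by (simp add: weF_def poset_map_def poset_arr_def F_right_def diamond_le_def Eprime_def)
  moreover have "fibF diamond F_right (poset_arr 4 2 3)"
    by (simp add: fibF_def poset_arr_def F_right_def diamond_le_def)
  moreover have "is_pullback diamond (poset_arr 4 1 3) (poset_arr 4 2 3)
                   (poset_arr 4 0 1) (poset_arr 4 0 2)"
    by (rule pullback_poset_cat[OF _ _ _ _ _ diamond_meet_1_2]) (simp_all add: diamond_le_def)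
  ultimately have "weF diamond (poset_map 4 F_right) (poset_arr 4 0 2)"
    unfolding right_proper_def by blast
  then show False
    using iso_poset_cat[of 4 diamond_le "poset_arr 4 0 2"]
    by (simp add: weF_def poset_map_def poset_arr_def F_right_def diamond_le_def Eprime_def)
qed

lemma diamond_not_left_proper:
  "\<not> left_proper diamond F_left (poset_map 4 F_left)"
proof
  assume "left_proper diamond F_left (poset_map 4 F_left)"
  moreover have "weF diamond (poset_map 4 F_left) (poset_arr 4 0 1)"
    by (simp add: weF_def poset_map_def poset_arr_def F_left_def diamond_le_def Eprime_def)
  moreover have "cofF diamond F_left (poset_arr 4 0 2)"
    by (simp add: cofF_def poset_arr_def F_left_def diamond_le_def)
  moreover have "is_pushout diamond (poset_arr 4 0 1) (poset_arr 4 0 2)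
                   (poset_arr 4 1 3) (poset_arr 4 2 3)"
    by (rule pushout_poset_cat[OF _ _ _ _ _ diamond_join_1_2]) (simp_all add: diamond_le_def)
  ultimately have "weF diamond (poset_map 4 F_left) (poset_arr 4 2 3)"
    unfolding left_proper_def by blast
  then show False
    using iso_poset_cat[of 4 diamond_le "poset_arr 4 2 3"]
    by (simp add: weF_def poset_map_def poset_arr_def F_left_def diamond_le_def Eprime_def)
qed

theorem corollary4:
  shows "(\<exists>(C :: (nat, nat) cat) Fo Fa. category C \<and> bicomplete C \<and>
            is_functor C Eprime Fo Fa \<and> \<not> right_proper C Fo Fa) \<and>
         (\<exists>(C :: (nat, nat) cat) Fo Fa. category C \<and> bicomplete C \<and>
            is_functor C Eprime Fo Fa \<and> \<not> left_proper C Fo Fa)"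
proof -
  have cat: "category diamond"
    by (rule category_poset_cat[OF preorder_diamond])
  have bicomplete: "bicomplete diamond"
    by (rule bicomplete_poset_cat[OF diamond_joins])
  have "is_functor diamond Eprime F_right (poset_map 4 F_right)"
    by (rule functor_poset_map) (auto simp: F_right_def diamond_le_def)
  moreover have "is_functor diamond Eprime F_left (poset_map 4 F_left)"
    by (rule functor_poset_map) (auto simp: F_left_def diamond_le_def)
  ultimately show ?thesis
    using cat bicomplete diamond_not_right_proper diamond_not_left_proper by blast
qed

end
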